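(* Let $X,Y$ be complex Banach spaces, $U:X\to Y$ a non-null bounded linear operator with $\|U\|<\lambda$, $1\le p<\infty$, and $Z=(\mathbb C^n,\|\cdot\|)$ a Banach space whose canonical basis is normalized $1$-unconditional. Then for every $n$, $$\frac{K_\lambda(\mathbb D,p,U)}{n}\le A_\lambda(B_Z,p,U)\le\|Id:Z\to\ell_1^n\|\frac{K_\lambda(\mathbb D,p,U)}{n^{1/p}}.$$
   Context: $\mathbb D$ is the open unit disc. For a complete Reinhardt domain $\Omega\subset\mathbb C^k$ and bounded holomorphic $f:\Omega\to X$, $f(z)=\sum_\alpha a_\alpha z^\alpha$, $\|f\|_{\Omega,X}=\sup_\Omega\|f(z)\|_X$. $K_\lambda(\Omega,p,U)$: supremum of $r\ge0$ with $\sup_{z\in r\Omega}\sum_\alpha\|U(a_\alpha)z^\alpha\|_Y^p\le\lambda^p\|f\|_{\Omega,X}^p$ for all such $f$. $A_\lambda(\Omega,p,U)$: supremum of $\frac1k\sum_{i=1}^kr_i$ over $r\in\mathbb R^k_{\ge0}$ with $\sum_\alpha\|U(a_\alpha)\|_Y^pr^{p\alpha}\le\lambda^p\|f\|_{\Omega,X}^p$ for all such $f$. $B_Z$ is the open unit ball of $Z$. *)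

theory Defs
  imports "HOL-Analysis.Analysis"
begin

text \<open>Complex Banach space structure on a real Banach space type: an explicit
  complex scalar multiplication extending the real one, compatible with the norm.\<close>
definition complex_scaling :: "(complex \<Rightarrow> 'a::real_normed_vector \<Rightarrow> 'a) \<Rightarrow> bool" where
  "complex_scaling sc \<longleftrightarrow>
     (\<forall>c x y. sc c (x + y) = sc c x + sc c y) \<and>
     (\<forall>c d x. sc (c + d) x = sc c x + sc d x) \<and>
     (\<forall>c d x. sc c (sc d x) = sc (c * d) x) \<and>
     (\<forall>r x. sc (complex_of_real r) x = r *\<^sub>R x) \<and>
     (\<forall>c x. norm (sc c x) = cmod c * norm x)"

definition monom_pow :: "'a::comm_semiring_1 ^ 'k \<Rightarrow> nat ^ 'k \<Rightarrow> 'a" where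
  "monom_pow z \<alpha> = (\<Prod>i\<in>UNIV. (z $ i) ^ (\<alpha> $ i))"

text \<open>f is a bounded holomorphic function on the complete Reinhardt domain Omega with
  (monomial) power series coefficients a, i.e. f(z) = sum_alpha a_alpha z^alpha on Omega.\<close>
definition bhol_series ::
  "(complex \<Rightarrow> 'x::real_normed_vector \<Rightarrow> 'x) \<Rightarrow> (complex ^ 'k) set \<Rightarrow>
   (complex ^ 'k \<Rightarrow> 'x) \<Rightarrow> (nat ^ 'k \<Rightarrow> 'x) \<Rightarrow> bool" where
  "bhol_series scX \<Omega> f a \<longleftrightarrow>
     (\<forall>z\<in>\<Omega>. ((\<lambda>\<alpha>. scX (monom_pow z \<alpha>) (a \<alpha>)) has_sum f z) UNIV) \<and> bounded (f ` \<Omega>)"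

definition supnorm :: "(complex ^ 'k) set \<Rightarrow> (complex ^ 'k \<Rightarrow> 'x::real_normed_vector) \<Rightarrow> real" where
  "supnorm \<Omega> f = Sup ((\<lambda>z. norm (f z)) ` \<Omega>)"

text \<open>K_lambda(Omega,p,U). The (possibly infinite) sum of nonnegative terms being
  bounded by C is expressed as: all finite partial sums are bounded by C.\<close>
definition K_const ::
  "(complex \<Rightarrow> 'x::real_normed_vector \<Rightarrow> 'x) \<Rightarrow> (complex \<Rightarrow> 'y::real_normed_vector \<Rightarrow> 'y) \<Rightarrow>
   ('x \<Rightarrow> 'y) \<Rightarrow> real \<Rightarrow> real \<Rightarrow> (complex ^ 'k) set \<Rightarrow> real" where
  "K_const scX scY U lam p \<Omega> = Sup {r. r \<ge> 0 \<and>
     (\<forall>f a. bhol_series scX \<Omega> f a \<longrightarrow>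
        (\<forall>z\<in>(\<lambda>w. r *\<^sub>R w) ` \<Omega>. \<forall>F. finite F \<longrightarrow>
           (\<Sum>\<alpha>\<in>F. norm (scY (monom_pow z \<alpha>) (U (a \<alpha>))) powr p)
             \<le> lam powr p * supnorm \<Omega> f powr p))}"

definition A_const ::
  "(complex \<Rightarrow> 'x::real_normed_vector \<Rightarrow> 'x) \<Rightarrow>
   ('x \<Rightarrow> 'y::real_normed_vector) \<Rightarrow> real \<Rightarrow> real \<Rightarrow> (complex ^ 'k) set \<Rightarrow> real" where
  "A_const scX U lam p \<Omega> = Sup {(\<Sum>i\<in>UNIV. r $ i) / real CARD('k) | r :: real ^ 'k.
     (\<forall>i. r $ i \<ge> 0) \<and>
     (\<forall>f a. bhol_series scX \<Omega> f a \<longrightarrow>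
        (\<forall>F. finite F \<longrightarrow>
           (\<Sum>\<alpha>\<in>F. norm (U (a \<alpha>)) powr p * (monom_pow r \<alpha>) powr p)
             \<le> lam powr p * supnorm \<Omega> f powr p))}"

definition unit_disc1 :: "(complex ^ 1) set" where
  "unit_disc1 = {z. cmod (z $ 1) < 1}"

text \<open>N is a norm on C^n whose canonical basis is normalized and 1-unconditional
  (completeness is automatic in finite dimension).\<close>
definition normalized_1_unconditional_norm :: "(complex ^ 'n \<Rightarrow> real) \<Rightarrow> bool" where
  "normalized_1_unconditional_norm N \<longleftrightarrow>
     (\<forall>z. N z = 0 \<longleftrightarrow> z = 0) \<and>
     (\<forall>c z. N (c *s z) = cmod c * N z) \<and>
     (\<forall>z w. N (z + w) \<le> N z + N w) \<and>
     (\<forall>i. N (axis i 1) = 1) \<and>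
     (\<forall>\<epsilon> z. (\<forall>i. cmod (\<epsilon> i) = 1) \<longrightarrow> N (\<chi> i. \<epsilon> i * z $ i) = N z)"

definition open_unit_ball :: "(complex ^ 'n \<Rightarrow> real) \<Rightarrow> (complex ^ 'n) set" where
  "open_unit_ball N = {z. N z < 1}"

definition id_to_l1_norm :: "(complex ^ 'n \<Rightarrow> real) \<Rightarrow> real" where
  "id_to_l1_norm N = Sup {(\<Sum>i\<in>UNIV. cmod (z $ i)) | z. N z \<le> 1}"

end

theory Submission
  imports Defs
begin

(* Lower bound: restricting a function on B_Z to a coordinate axis gives a function on the
   disc with no larger supremum (the basis vectors have norm 1), so every radius r admissible
   for K yields the admissible multiradius s e_i (s < r) for A, whose mean is s/n.

   Upper bound: for an admissible multiradius r put C = |Id : Z -> l_1^n|. Composing a function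
   g on the disc with z -> (z_1 + ... + z_n)/C gives a function on B_Z, and the multinomial
   theorem expresses its coefficients through those of g. Grouping the monomials of degree m
   and using (sum_i r_i^p)^m <= sum_|alpha|=m (multinomial coeff * r^alpha)^p together with
   the power-mean inequality (sum_i r_i)^p <= n^(p-1) sum_i r_i^p shows that
   (sum_i r_i) / (C n^(1-1/p)) is admissible for K. *)

lemma complex_scaling_add_left: "complex_scaling sc \<Longrightarrow> sc (c + d) x = sc c x + sc d x"
  unfolding complex_scaling_def by blast

lemma complex_scaling_assoc: "complex_scaling sc \<Longrightarrow> sc c (sc d x) = sc (c * d) x"
  unfolding complex_scaling_def by blast

lemma complex_scaling_of_real: "complex_scaling sc \<Longrightarrow> sc (complex_of_real r) x = r *\<^sub>R x"
  unfolding complex_scaling_def by blast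

lemma norm_complex_scaling: "complex_scaling sc \<Longrightarrow> norm (sc c x) = cmod c * norm x"
  unfolding complex_scaling_def by blast

lemma complex_scaling_one: "complex_scaling sc \<Longrightarrow> sc 1 x = x"
  using complex_scaling_of_real[of sc 1 x] by simp

lemma complex_scaling_zero_left: "complex_scaling sc \<Longrightarrow> sc 0 x = 0"
  using complex_scaling_of_real[of sc 0 x] by simp

lemma complex_scaling_zero_right: "complex_scaling sc \<Longrightarrow> sc c 0 = 0"
  using norm_complex_scaling[of sc c 0] by simp

lemma complex_scaling_sum_left:
  "complex_scaling sc \<Longrightarrow> sc (sum f A) x = (\<Sum>i\<in>A. sc (f i) x)"
  by (induction A rule: infinite_finite_induct)
     (auto simp: complex_scaling_zero_left complex_scaling_add_left)

section \<open>Monomials and the multinomial expansion\<close>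

lemma monom_pow_vec1: "monom_pow (z :: 'a::comm_semiring_1 ^ 1) \<beta> = (z $ 1) ^ (\<beta> $ 1)"
  unfolding monom_pow_def by simp

lemma monom_pow_axis:
  "monom_pow (axis i x :: 'a::comm_semiring_1 ^ 'k) \<alpha>
     = (if \<forall>j. j \<noteq> i \<longrightarrow> \<alpha> $ j = 0 then x ^ (\<alpha> $ i) else 0)"
proof (cases "\<forall>j. j \<noteq> i \<longrightarrow> \<alpha> $ j = 0")
  case True
  then have "monom_pow (axis i x) \<alpha> = (\<Prod>j\<in>UNIV. if j = i then x ^ (\<alpha> $ i) else 1)"
    unfolding monom_pow_def by (intro prod.cong) (auto simp: axis_def)
  with True show ?thesis by simp
next
  case False
  then obtain j where "j \<noteq> i" "\<alpha> $ j \<noteq> 0" by blast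
  then have "axis i x $ j ^ (\<alpha> $ j) = 0" by (simp add: axis_def power_0_left)
  then have "monom_pow (axis i x) \<alpha> = 0"
    unfolding monom_pow_def by (intro prod_zero) auto
  with False show ?thesis by (subst if_not_P)
qed

lemma monom_pow_zero: "monom_pow (0 :: 'a::comm_semiring_1 ^ 'k) \<alpha> = (if \<alpha> = 0 then 1 else 0)"
proof (cases "\<alpha> = 0")
  case False
  then obtain i where "\<alpha> $ i \<noteq> 0" by (auto simp: vec_eq_iff)
  then have "monom_pow (0 :: 'a ^ 'k) \<alpha> = 0"
    unfolding monom_pow_def by (intro prod_zero) (auto simp: power_0_left)
  with False show ?thesis by simp
qed (simp add: monom_pow_def)

lemma monom_pow_at_axis: "monom_pow z (axis i m) = z $ i ^ m"
proof -
  have "monom_pow z (axis i m) = (\<Prod>j\<in>UNIV. if j = i then z $ i ^ m else 1)"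
    unfolding monom_pow_def by (intro prod.cong) (auto simp: axis_def)
  then show ?thesis by simp
qed

lemma norm_monom_pow:
  "norm (monom_pow (z :: 'a::real_normed_field ^ 'k) \<alpha>) = monom_pow (\<chi> i. norm (z $ i)) \<alpha>"
  unfolding monom_pow_def by (simp add: prod_norm[symmetric] norm_power)

lemma monom_pow_nonneg: "(\<And>i. 0 \<le> r $ i) \<Longrightarrow> 0 \<le> monom_pow (r :: real ^ 'k) \<alpha>"
  unfolding monom_pow_def by (simp add: prod_nonneg)

lemma power_powr_nonneg: "0 \<le> (x::real) \<Longrightarrow> (x ^ k) powr p = (x powr p) ^ k"
  by (cases "x = 0") (auto simp: powr_power powr_realpow[symmetric] powr_powr mult.commute power_0_left)

lemma monom_pow_powr:
  assumes "\<And>i. 0 \<le> r $ i"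
  shows "monom_pow (r :: real ^ 'k) \<alpha> powr p = monom_pow (\<chi> i. r $ i powr p) \<alpha>"
  unfolding monom_pow_def prod_powr_distrib by (simp add: assms power_powr_nonneg)

abbreviation mdeg :: "nat ^ 'n \<Rightarrow> nat" where
  "mdeg \<alpha> \<equiv> \<Sum>i\<in>UNIV. \<alpha> $ i"

definition letter_count :: "nat \<Rightarrow> (nat \<Rightarrow> 'n) \<Rightarrow> nat ^ 'n::finite" where
  "letter_count m \<phi> = (\<chi> i. card {j \<in> {..<m}. \<phi> j = i})"

definition multinomial_coeff :: "nat ^ 'n::finite \<Rightarrow> nat" where
  "multinomial_coeff \<alpha> =
     card {\<phi> \<in> {..<mdeg \<alpha>} \<rightarrow>\<^sub>E UNIV. letter_count (mdeg \<alpha>) \<phi> = \<alpha>}"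

lemma finite_mdeg_level: "finite {\<alpha> :: nat ^ 'n. mdeg \<alpha> = m}"
proof (rule finite_subset)
  show "{\<alpha> :: nat ^ 'n. mdeg \<alpha> = m} \<subseteq> vec_lambda ` (UNIV \<rightarrow>\<^sub>E {..m})"
  proof
    fix \<alpha> :: "nat ^ 'n"
    assume "\<alpha> \<in> {\<alpha>. mdeg \<alpha> = m}"
    then have "\<alpha> $ i \<le> m" for i
      using member_le_sum[of i UNIV "vec_nth \<alpha>"] by simp
    then show "\<alpha> \<in> vec_lambda ` (UNIV \<rightarrow>\<^sub>E {..m})"
      by (intro image_eqI[of _ _ "vec_nth \<alpha>"]) auto
  qed
qed (intro finite_imageI finite_PiE; simp)

lemma mdeg_letter_count: "mdeg (letter_count m \<phi>) = m"
proof -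
  have "(\<Sum>i\<in>UNIV. card {j \<in> {..<m}. \<phi> j = i}) = (\<Sum>i\<in>UNIV. \<Sum>j\<in>{j \<in> {..<m}. \<phi> j = i}. 1)"
    by simp
  also have "\<dots> = (\<Sum>j\<in>{..<m}. 1)"
    by (rule sum.group) auto
  finally show ?thesis by (simp add: letter_count_def)
qed

theorem multinomial_expansion:
  fixes z :: "'a::comm_semiring_1 ^ 'n"
  shows "(\<Sum>i\<in>UNIV. z $ i) ^ m
           = (\<Sum>\<alpha> | mdeg \<alpha> = m. of_nat (multinomial_coeff \<alpha>) * monom_pow z \<alpha>)"
proof -
  have word: "(\<Prod>j\<in>{..<m}. z $ \<phi> j) = monom_pow z (letter_count m \<phi>)" for \<phi>
  proof -
    have "(\<Prod>j\<in>{..<m}. z $ \<phi> j) = (\<Prod>i\<in>UNIV. \<Prod>j\<in>{j \<in> {..<m}. \<phi> j = i}. z $ \<phi> j)"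
      by (rule prod.group[symmetric]) auto
    also have "\<dots> = (\<Prod>i\<in>UNIV. \<Prod>j\<in>{j \<in> {..<m}. \<phi> j = i}. z $ i)"
      by (intro prod.cong) auto
    finally show ?thesis by (simp add: monom_pow_def letter_count_def)
  qed
  have "(\<Sum>i\<in>UNIV. z $ i) ^ m = (\<Prod>j\<in>{..<m}. \<Sum>i\<in>UNIV. z $ i)"
    by simp
  also have "\<dots> = (\<Sum>\<phi> \<in> {..<m} \<rightarrow>\<^sub>E UNIV. \<Prod>j\<in>{..<m}. z $ \<phi> j)"
    by (rule prod_sum_PiE) auto
  also have "\<dots> = (\<Sum>\<phi> \<in> {..<m} \<rightarrow>\<^sub>E UNIV. monom_pow z (letter_count m \<phi>))"
    by (intro sum.cong refl word)
  also have "\<dots> = (\<Sum>\<alpha> | mdeg \<alpha> = m. \<Sum>\<phi> \<in> {\<phi> \<in> {..<m} \<rightarrow>\<^sub>E UNIV. letter_count m \<phi> = \<alpha>}.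
                     monom_pow z (letter_count m \<phi>))"
    by (rule sum.group[symmetric]) (simp_all add: finite_PiE finite_mdeg_level mdeg_letter_count image_subset_iff)
  also have "\<dots> = (\<Sum>\<alpha> | mdeg \<alpha> = m. of_nat (multinomial_coeff \<alpha>) * monom_pow z \<alpha>)"
  proof (intro sum.cong refl)
    fix \<alpha> :: "nat ^ 'n"
    assume "\<alpha> \<in> {\<alpha>. mdeg \<alpha> = m}"
    then have "multinomial_coeff \<alpha> = card {\<phi> \<in> {..<m} \<rightarrow>\<^sub>E UNIV. letter_count m \<phi> = \<alpha>}"
      by (simp add: multinomial_coeff_def)
    then show "(\<Sum>\<phi> \<in> {\<phi> \<in> {..<m} \<rightarrow>\<^sub>E UNIV. letter_count m \<phi> = \<alpha>}. monom_pow z (letter_count m \<phi>))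
               = of_nat (multinomial_coeff \<alpha>) * monom_pow z \<alpha>"
      by simp
  qed
  finally show ?thesis .
qed

section \<open>Power means and grouped series\<close>

lemma powr_sum_le_card_powr_mult_sum_powr:
  fixes r :: "'a \<Rightarrow> real"
  assumes A: "finite A" and r: "\<And>i. i \<in> A \<Longrightarrow> 0 \<le> r i" and p: "1 \<le> p"
  shows "(\<Sum>i\<in>A. r i) powr p \<le> real (card A) powr (p - 1) * (\<Sum>i\<in>A. r i powr p)"
proof -
  \<comment> \<open>Jensen on the support of r: the library proves convexity of x powr p only on (0, \<infinity>)\<close>
  define S where "S = {i \<in> A. 0 < r i}"
  define k where "k = real (card S)"
  have S: "finite S" "S \<subseteq> A" using A by (auto simp: S_def)
  have sum_S: "(\<Sum>i\<in>A. r i) = (\<Sum>i\<in>S. r i)"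
    by (rule sum.mono_neutral_right) (use A r in \<open>auto simp: S_def less_le\<close>)
  show ?thesis
  proof (cases "S = {}")
    case True
    then show ?thesis using sum_S by (simp add: sum_nonneg)
  next
    case False
    then have k: "0 < k" using S by (simp add: k_def card_gt_0_iff)
    have "(\<Sum>i\<in>S. (1 / k) *\<^sub>R r i) powr p \<le> (\<Sum>i\<in>S. (1 / k) * r i powr p)"
      using k False S by (intro convex_on_sum[OF _ _ powr_convex[OF p]]) (auto simp: S_def k_def)
    then have "((\<Sum>i\<in>S. r i) / k) powr p \<le> (\<Sum>i\<in>S. r i powr p) / k"
      by (simp add: sum_distrib_left[symmetric] sum_divide_distrib[symmetric])
    also have "\<dots> \<le> (\<Sum>i\<in>A. r i powr p) / k"
      using k S A by (intro divide_right_mono sum_mono2) auto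
    finally have "(\<Sum>i\<in>S. r i) powr p \<le> k powr p * ((\<Sum>i\<in>A. r i powr p) / k)"
      using k by (simp add: powr_divide sum_nonneg divide_le_eq mult.commute less_imp_le S_def)
    also have "\<dots> = k powr (p - 1) * (\<Sum>i\<in>A. r i powr p)"
      using k by (simp add: powr_diff)
    also have "\<dots> \<le> real (card A) powr (p - 1) * (\<Sum>i\<in>A. r i powr p)"
      using k p S A by (intro mult_right_mono powr_mono2) (auto simp: k_def card_mono sum_nonneg)
    finally show ?thesis using sum_S by simp
  qed
qed

lemma powr_sum_div_card_powr_le_sum_powr:
  fixes r :: "real ^ 'n"
  assumes r: "\<And>i. 0 \<le> r $ i" and p: "1 \<le> p"
  shows "((\<Sum>i\<in>UNIV. r $ i) / real CARD('n) powr (1 - 1 / p)) powr p \<le> (\<Sum>i\<in>UNIV. r $ i powr p)"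
proof -
  have "(real CARD('n) powr (1 - 1 / p)) powr p = real CARD('n) powr (p - 1)"
    using p by (simp add: powr_powr algebra_simps)
  then have "((\<Sum>i\<in>UNIV. r $ i) / real CARD('n) powr (1 - 1 / p)) powr p
               = (\<Sum>i\<in>UNIV. r $ i) powr p / real CARD('n) powr (p - 1)"
    by (simp add: powr_divide r sum_nonneg)
  moreover have "(\<Sum>i\<in>UNIV. r $ i) powr p \<le> real CARD('n) powr (p - 1) * (\<Sum>i\<in>UNIV. r $ i powr p)"
    using powr_sum_le_card_powr_mult_sum_powr[of UNIV "vec_nth r" p] r p by simp
  ultimately show ?thesis
    by (simp add: divide_le_eq mult.commute)
qed

lemma summable_power_mult_norm_if_bounded:
  fixes c :: "nat \<Rightarrow> 'a::real_normed_vector"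
  assumes bound: "\<And>m. \<rho> ^ m * norm (c m) \<le> B" and q: "0 \<le> q" "q < \<rho>"
  shows "summable (\<lambda>m. q ^ m * norm (c m))"
proof (rule summable_comparison_test)
  have "q ^ m * norm (c m) = (q / \<rho>) ^ m * (\<rho> ^ m * norm (c m))" for m
    using q by (simp add: power_divide)
  also have "\<dots> m \<le> (q / \<rho>) ^ m * B" for m
    using q by (intro mult_left_mono bound) auto
  finally show "\<exists>N. \<forall>m\<ge>N. norm (q ^ m * norm (c m)) \<le> B * (q / \<rho>) ^ m"
    using q by (simp add: mult.commute)
  show "summable (\<lambda>m. B * (q / \<rho>) ^ m)"
    using q by (intro summable_mult summable_geometric) auto
qed

lemma has_sum_group_finite_fibres:
  fixes T :: "'a \<Rightarrow> 'b::banach" and d :: "'a \<Rightarrow> nat"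
  assumes fin: "\<And>m. finite {\<alpha>. d \<alpha> = m}"
    and abs: "summable (\<lambda>m. \<Sum>\<alpha> | d \<alpha> = m. norm (T \<alpha>))"
    and levels: "((\<lambda>m. \<Sum>\<alpha> | d \<alpha> = m. T \<alpha>) has_sum S) UNIV"
  shows "(T has_sum S) UNIV"
proof -
  have fibres: "(\<Union>m. {\<alpha>. d \<alpha> = m}) = UNIV" by blast
  have "(\<lambda>m. \<Sum>\<alpha> | d \<alpha> = m. norm (T \<alpha>)) summable_on UNIV"
    using abs by (rule summable_nonneg_imp_summable_on) (simp add: sum_nonneg)
  then have "(\<lambda>\<alpha>. norm (T \<alpha>)) summable_on (\<Union>m. {\<alpha>. d \<alpha> = m})"
    using fin by (intro summable_on_UnionI) (auto intro: has_sum_finiteI simp: disjoint_family_on_def)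
  then have "T summable_on UNIV"
    unfolding fibres by (rule abs_summable_summable)
  then have "(T has_sum infsum T UNIV) UNIV"
    by (rule has_sum_infsum)
  moreover have bij: "bij_betw snd (SIGMA m:UNIV. {\<alpha>. d \<alpha> = m}) UNIV"
    by (rule bij_betwI[where g = "\<lambda>\<alpha>. (d \<alpha>, \<alpha>)"]) auto
  ultimately have "((\<lambda>x. T (snd x)) has_sum infsum T UNIV) (SIGMA m:UNIV. {\<alpha>. d \<alpha> = m})"
    by (subst has_sum_reindex_bij_betw[OF bij])
  then have "((\<lambda>m. \<Sum>\<alpha> | d \<alpha> = m. T \<alpha>) has_sum infsum T UNIV) UNIV"
    by (rule has_sum_SigmaD) (auto intro: has_sum_finiteI fin)
  then have "infsum T UNIV = S"
    using levels by (rule has_sum_unique)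
  with \<open>(T has_sum infsum T UNIV) UNIV\<close> show ?thesis
    by simp
qed

section \<open>Normalized 1-unconditional norms\<close>

context
  fixes N :: "complex ^ 'n \<Rightarrow> real"
  assumes N: "normalized_1_unconditional_norm N"
begin

lemma unconditional_norm_eq_zero_iff: "N z = 0 \<longleftrightarrow> z = 0"
  using N by (simp add: normalized_1_unconditional_norm_def)

lemma unconditional_norm_zero [simp]: "N 0 = 0"
  by (simp add: unconditional_norm_eq_zero_iff)

lemma unconditional_norm_scale: "N (c *s z) = cmod c * N z"
  using N by (simp add: normalized_1_unconditional_norm_def)

lemma unconditional_norm_triangle: "N (z + w) \<le> N z + N w"
  using N by (simp add: normalized_1_unconditional_norm_def)

lemma unconditional_norm_unimodular:
  "(\<And>i. cmod (\<epsilon> i) = 1) \<Longrightarrow> N (\<chi> i. \<epsilon> i * z $ i) = N z"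
  using N by (simp add: normalized_1_unconditional_norm_def)

lemma unconditional_norm_axis: "N (axis i w) = cmod w"
proof -
  have "axis i w = w *s axis i 1" by (simp add: vec_eq_iff axis_def)
  then show ?thesis using N by (simp add: unconditional_norm_scale normalized_1_unconditional_norm_def)
qed

lemma coordinate_le_unconditional_norm: "cmod (z $ i) \<le> N z"
proof -
  \<comment> \<open>z plus its copy with all coordinates but the i-th negated is 2 z_i e_i\<close>
  define \<epsilon> where "\<epsilon> j = (if j = i then 1 else - 1 :: complex)" for j
  have "cmod (\<epsilon> j) = 1" for j by (simp add: \<epsilon>_def)
  then have flip: "N (\<chi> j. \<epsilon> j * z $ j) = N z"
    by (rule unconditional_norm_unimodular)
  have "z + (\<chi> j. \<epsilon> j * z $ j) = axis i (2 * z $ i)"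
    by (simp add: vec_eq_iff \<epsilon>_def axis_def)
  then have "N (axis i (2 * z $ i)) \<le> N z + N z"
    using unconditional_norm_triangle[of z "\<chi> j. \<epsilon> j * z $ j"] flip by simp
  then show ?thesis by (simp add: unconditional_norm_axis norm_mult)
qed

lemma l1_norm_le_card_mult_unconditional_norm:
  "(\<Sum>i\<in>UNIV. cmod (z $ i)) \<le> real CARD('n) * N z"
  using sum_mono[of UNIV "\<lambda>i. cmod (z $ i)" "\<lambda>_. N z"] coordinate_le_unconditional_norm by simp

lemma bdd_above_l1_norms_unit_ball: "bdd_above {\<Sum>i\<in>UNIV. cmod (z $ i) | z. N z \<le> 1}"
proof (rule bdd_aboveI)
  fix x assume "x \<in> {\<Sum>i\<in>UNIV. cmod (z $ i) | z. N z \<le> 1}"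
  then obtain z where "x = (\<Sum>i\<in>UNIV. cmod (z $ i))" "N z \<le> 1" by blast
  then show "x \<le> real CARD('n)"
    using l1_norm_le_card_mult_unconditional_norm[of z] by (smt (verit) mult_left_le of_nat_0_le_iff)
qed

lemma id_to_l1_norm_ge_one: "1 \<le> id_to_l1_norm N"
proof -
  fix i :: 'n
  have "(\<Sum>j\<in>UNIV. cmod (axis i (1::complex) $ j)) = (\<Sum>j\<in>UNIV. if j = i then 1 else 0)"
    by (intro sum.cong) (auto simp: axis_def)
  then have "(\<Sum>j\<in>UNIV. cmod (axis i (1::complex) $ j)) = 1"
    by simp
  then have "1 \<in> {\<Sum>j\<in>UNIV. cmod (z $ j) | z. N z \<le> 1}"
    using unconditional_norm_axis[of i 1] by force
  then show ?thesis
    unfolding id_to_l1_norm_def by (rule cSup_upper[OF _ bdd_above_l1_norms_unit_ball])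
qed

lemma l1_norm_le_id_to_l1_norm: "(\<Sum>i\<in>UNIV. cmod (z $ i)) \<le> id_to_l1_norm N * N z"
proof (cases "z = 0")
  case False
  then have pos: "0 < N z"
    using coordinate_le_unconditional_norm[of z] unconditional_norm_eq_zero_iff[of z]
    by (metis norm_ge_zero order_le_less order_trans)
  define u where "u = complex_of_real (1 / N z) *s z"
  have "N u = 1"
    using pos by (simp add: u_def unconditional_norm_scale norm_divide)
  then have "(\<Sum>i\<in>UNIV. cmod (u $ i)) \<le> id_to_l1_norm N"
    unfolding id_to_l1_norm_def by (intro cSup_upper[OF _ bdd_above_l1_norms_unit_ball]) auto
  moreover have "(\<Sum>i\<in>UNIV. cmod (u $ i)) = (\<Sum>i\<in>UNIV. cmod (z $ i)) / N z"
    using pos by (simp add: u_def norm_mult norm_divide sum_divide_distrib)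
  ultimately show ?thesis
    using pos by (simp add: divide_le_eq mult.commute)
qed simp

lemma zero_in_open_unit_ball: "0 \<in> open_unit_ball N"
  by (simp add: open_unit_ball_def)

end

section \<open>Bounded holomorphic series\<close>

lemma zero_in_unit_disc1: "0 \<in> unit_disc1"
  by (simp add: unit_disc1_def)

lemma of_real_vec1_in_scaled_unit_disc1:
  assumes "0 \<le> s" "s < \<rho>"
  shows "(\<chi> _::1. complex_of_real s) \<in> (\<lambda>w. \<rho> *\<^sub>R w) ` unit_disc1"
proof
  show "(\<chi> _::1. complex_of_real s) = \<rho> *\<^sub>R (\<chi> _::1. complex_of_real (s / \<rho>))"
    using assms by (simp add: vec_eq_iff of_real_def)
  show "(\<chi> _::1. complex_of_real (s / \<rho>)) \<in> unit_disc1"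
    using assms by (simp add: unit_disc1_def norm_divide del: of_real_divide)
qed

lemma bhol_series_bounded: "bhol_series scX \<Omega> f a \<Longrightarrow> bounded (f ` \<Omega>)"
  by (simp add: bhol_series_def)

lemma bhol_series_at_zero:
  assumes cs: "complex_scaling scX" and f: "bhol_series scX \<Omega> f a" and "0 \<in> \<Omega>"
  shows "f 0 = a 0"
proof -
  have "((\<lambda>\<alpha>. scX (monom_pow 0 \<alpha>) (a \<alpha>)) has_sum f 0) UNIV"
    using f \<open>0 \<in> \<Omega>\<close> by (simp add: bhol_series_def)
  moreover have "((\<lambda>\<alpha>. scX (monom_pow 0 \<alpha>) (a \<alpha>)) has_sum a 0) UNIV"
    by (rule has_sum_finite_neutralI[of "{0}"])
       (auto simp: monom_pow_zero complex_scaling_one[OF cs] complex_scaling_zero_left[OF cs])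
  ultimately show ?thesis by (rule has_sum_unique)
qed

lemma norm_le_supnorm: "bounded (f ` \<Omega>) \<Longrightarrow> z \<in> \<Omega> \<Longrightarrow> norm (f z) \<le> supnorm \<Omega> f"
  unfolding supnorm_def by (intro cSUP_upper bounded_imp_bdd_above) (simp_all add: bounded_norm_comp)

lemma supnorm_nonneg: "bounded (f ` \<Omega>) \<Longrightarrow> z \<in> \<Omega> \<Longrightarrow> 0 \<le> supnorm \<Omega> f"
  using norm_le_supnorm norm_ge_zero order_trans by blast

lemma supnorm_comp_le:
  assumes "bounded (f ` \<Omega>)" "\<Omega>' \<noteq> {}" "\<And>w. w \<in> \<Omega>' \<Longrightarrow> \<phi> w \<in> \<Omega>"
  shows "supnorm \<Omega>' (\<lambda>w. f (\<phi> w)) \<le> supnorm \<Omega> f"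
  unfolding supnorm_def[of \<Omega>'] using assms by (intro cSUP_least norm_le_supnorm) auto

lemma bhol_series_monomial:
  assumes cs: "complex_scaling scX" and le1: "\<And>z. z \<in> \<Omega> \<Longrightarrow> cmod (monom_pow z \<alpha>\<^sub>0) \<le> 1"
  shows "bhol_series scX \<Omega> (\<lambda>z. scX (monom_pow z \<alpha>\<^sub>0) x) (\<lambda>\<alpha>. if \<alpha> = \<alpha>\<^sub>0 then x else 0)"
    and "\<Omega> \<noteq> {} \<Longrightarrow> supnorm \<Omega> (\<lambda>z. scX (monom_pow z \<alpha>\<^sub>0) x) \<le> norm x"
proof -
  have bound: "norm (scX (monom_pow z \<alpha>\<^sub>0) x) \<le> norm x" if "z \<in> \<Omega>" for z
    using le1[OF that] by (simp add: norm_complex_scaling[OF cs] mult_left_le_one_le)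
  have "((\<lambda>\<alpha>. scX (monom_pow z \<alpha>) (if \<alpha> = \<alpha>\<^sub>0 then x else 0)) has_sum scX (monom_pow z \<alpha>\<^sub>0) x) UNIV"
    for z
    by (rule has_sum_finite_neutralI[of "{\<alpha>\<^sub>0}"]) (auto simp: complex_scaling_zero_right[OF cs])
  moreover have "bounded ((\<lambda>z. scX (monom_pow z \<alpha>\<^sub>0) x) ` \<Omega>)"
    unfolding bounded_iff using bound by blast
  ultimately show "bhol_series scX \<Omega> (\<lambda>z. scX (monom_pow z \<alpha>\<^sub>0) x) (\<lambda>\<alpha>. if \<alpha> = \<alpha>\<^sub>0 then x else 0)"
    by (simp add: bhol_series_def)
  show "supnorm \<Omega> (\<lambda>z. scX (monom_pow z \<alpha>\<^sub>0) x) \<le> norm x" if "\<Omega> \<noteq> {}"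
    unfolding supnorm_def using that bound by (intro cSUP_least) auto
qed

lemma disc_series_has_sum:
  assumes g: "bhol_series scX unit_disc1 g b" and w: "cmod w < 1"
  shows "((\<lambda>m. scX (w ^ m) (b (\<chi> _. m))) has_sum g (\<chi> _. w)) UNIV"
proof -
  have "((\<lambda>\<beta>. scX (monom_pow (\<chi> _. w) \<beta>) (b \<beta>)) has_sum g (\<chi> _. w)) UNIV"
    using g w by (simp add: bhol_series_def unit_disc1_def)
  moreover have "bij_betw (\<lambda>m. \<chi> _::1. m) UNIV (UNIV :: (nat ^ 1) set)"
    by (rule bij_betwI[where g = "\<lambda>\<beta>. \<beta> $ 1"]) (auto simp flip: vector_one)
  ultimately have "((\<lambda>m. scX (monom_pow (\<chi> _. w) (\<chi> _::1. m)) (b (\<chi> _. m))) has_sum g (\<chi> _. w)) UNIV"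
    by (subst has_sum_reindex_bij_betw)
  then show ?thesis
    by (simp add: monom_pow_vec1)
qed

lemma summable_disc_coeffs:
  assumes cs: "complex_scaling scX" and g: "bhol_series scX unit_disc1 g b"
    and q: "0 \<le> q" "q < 1"
  shows "summable (\<lambda>m. q ^ m * norm (b (\<chi> _. m)))"
proof -
  define \<rho> where "\<rho> = (1 + q) / 2"
  have \<rho>: "q < \<rho>" "\<rho> < 1" using q by (auto simp: \<rho>_def)
  have "((\<lambda>m. scX (complex_of_real \<rho> ^ m) (b (\<chi> _. m))) has_sum g (\<chi> _. complex_of_real \<rho>)) UNIV"
    using \<rho> q by (intro disc_series_has_sum[OF g]) auto
  then have "summable (\<lambda>m. scX (complex_of_real \<rho> ^ m) (b (\<chi> _. m)))"
    using has_sum_imp_sums sums_summable by blast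
  then have "(\<lambda>m. scX (complex_of_real \<rho> ^ m) (b (\<chi> _. m))) \<longlonglongrightarrow> 0"
    by (rule summable_LIMSEQ_zero)
  then have "Bseq (\<lambda>m. scX (complex_of_real \<rho> ^ m) (b (\<chi> _. m)))"
    by (rule convergent_imp_Bseq[OF convergentI])
  then obtain B where "norm (scX (complex_of_real \<rho> ^ m) (b (\<chi> _. m))) \<le> B" for m
    unfolding Bseq_def by blast
  then have "\<rho> ^ m * norm (b (\<chi> _. m)) \<le> B" for m
    using \<rho> q by (simp add: norm_complex_scaling[OF cs] norm_power)
  then show ?thesis
    using q(1) \<rho>(1) by (rule summable_power_mult_norm_if_bounded)
qed

lemma scaled_multinomial_expansion:
  fixes z :: "'a::comm_semiring_1 ^ 'n"
  shows "(c * (\<Sum>i\<in>UNIV. z $ i)) ^ m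
           = (\<Sum>\<alpha> | mdeg \<alpha> = m. monom_pow z \<alpha> * (c ^ m * of_nat (multinomial_coeff \<alpha>)))"
proof -
  have "(c * (\<Sum>i\<in>UNIV. z $ i)) ^ m = c ^ m * (\<Sum>i\<in>UNIV. z $ i) ^ m"
    by (rule power_mult_distrib)
  also have "\<dots> = (\<Sum>\<alpha> | mdeg \<alpha> = m. monom_pow z \<alpha> * (c ^ m * of_nat (multinomial_coeff \<alpha>)))"
    unfolding multinomial_expansion sum_distrib_left by (intro sum.cong) (simp_all add: mult_ac)
  finally show ?thesis .
qed

lemma scaled_coordinate_sum_in_unit_disc1:
  assumes "cmod c * (\<Sum>i\<in>UNIV. cmod (z $ i)) < 1"
  shows "(\<chi> _. c * (\<Sum>i\<in>UNIV. z $ i)) \<in> unit_disc1"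
proof -
  have "cmod (c * (\<Sum>i\<in>UNIV. z $ i)) \<le> cmod c * (\<Sum>i\<in>UNIV. cmod (z $ i))"
    by (simp add: norm_mult mult_left_mono norm_sum)
  with assms show ?thesis by (simp add: unit_disc1_def)
qed

definition coordinate_sum_coeffs ::
  "(complex \<Rightarrow> 'x \<Rightarrow> 'x) \<Rightarrow> complex \<Rightarrow> (nat ^ 1 \<Rightarrow> 'x) \<Rightarrow> nat ^ 'n::finite \<Rightarrow> 'x" where
  "coordinate_sum_coeffs scX c b \<alpha> = scX (c ^ mdeg \<alpha> * of_nat (multinomial_coeff \<alpha>)) (b (\<chi> _. mdeg \<alpha>))"

lemma coordinate_sum_coeffs_level_sum:
  assumes cs: "complex_scaling scX"
  shows "(\<Sum>\<alpha> | mdeg \<alpha> = m. scX (monom_pow z \<alpha>) (coordinate_sum_coeffs scX c b \<alpha>))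
           = scX ((c * (\<Sum>i\<in>UNIV. z $ i)) ^ m) (b (\<chi> _. m))"
proof -
  have "(\<Sum>\<alpha> | mdeg \<alpha> = m. scX (monom_pow z \<alpha>) (coordinate_sum_coeffs scX c b \<alpha>))
          = (\<Sum>\<alpha> | mdeg \<alpha> = m. scX (monom_pow z \<alpha> * (c ^ m * of_nat (multinomial_coeff \<alpha>))) (b (\<chi> _. m)))"
    by (intro sum.cong) (simp_all add: coordinate_sum_coeffs_def complex_scaling_assoc[OF cs])
  also have "\<dots> = scX ((c * (\<Sum>i\<in>UNIV. z $ i)) ^ m) (b (\<chi> _. m))"
    by (simp add: scaled_multinomial_expansion complex_scaling_sum_left[OF cs])
  finally show ?thesis .
qed

lemma coordinate_sum_coeffs_level_norm_sum:
  assumes cs: "complex_scaling scX"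
  shows "(\<Sum>\<alpha> | mdeg \<alpha> = m. norm (scX (monom_pow z \<alpha>) (coordinate_sum_coeffs scX c b \<alpha>)))
           = (cmod c * (\<Sum>i\<in>UNIV. cmod (z $ i))) ^ m * norm (b (\<chi> _. m))"
proof -
  have "(\<Sum>\<alpha> | mdeg \<alpha> = m. norm (scX (monom_pow z \<alpha>) (coordinate_sum_coeffs scX c b \<alpha>)))
          = (\<Sum>\<alpha> | mdeg \<alpha> = m. norm (scX (monom_pow z \<alpha> * (c ^ m * of_nat (multinomial_coeff \<alpha>)))
                                             (b (\<chi> _. m))))"
    by (intro sum.cong) (simp_all add: coordinate_sum_coeffs_def complex_scaling_assoc[OF cs])
  also have "\<dots> = (\<Sum>\<alpha> | mdeg \<alpha> = m. monom_pow (\<chi> i. cmod (z $ i)) \<alpha>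
                       * (cmod c ^ m * of_nat (multinomial_coeff \<alpha>))) * norm (b (\<chi> _. m))"
    by (simp add: norm_complex_scaling[OF cs] norm_monom_pow norm_mult norm_power sum_distrib_right)
  also have "\<dots> = (cmod c * (\<Sum>i\<in>UNIV. cmod (z $ i))) ^ m * norm (b (\<chi> _. m))"
    by (simp only: scaled_multinomial_expansion[symmetric]) simp
  finally show ?thesis .
qed

lemma bhol_series_comp_sum:
  fixes g :: "complex ^ 1 \<Rightarrow> 'x::banach" and \<Omega> :: "(complex ^ 'n) set"
  assumes cs: "complex_scaling scX" and g: "bhol_series scX unit_disc1 g b"
    and inside: "\<And>z. z \<in> \<Omega> \<Longrightarrow> cmod c * (\<Sum>i\<in>UNIV. cmod (z $ i)) < 1"
  shows "bhol_series scX \<Omega> (\<lambda>z. g (\<chi> _. c * (\<Sum>i\<in>UNIV. z $ i))) (coordinate_sum_coeffs scX c b)"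
proof -
  note in_disc = scaled_coordinate_sum_in_unit_disc1[OF inside]
  have "((\<lambda>\<alpha>. scX (monom_pow z \<alpha>) (coordinate_sum_coeffs scX c b \<alpha>))
          has_sum g (\<chi> _. c * (\<Sum>i\<in>UNIV. z $ i))) UNIV" if z: "z \<in> \<Omega>" for z
  proof (rule has_sum_group_finite_fibres[where d = "\<lambda>\<alpha>. mdeg \<alpha>"])
    have "summable (\<lambda>m. (cmod c * (\<Sum>i\<in>UNIV. cmod (z $ i))) ^ m * norm (b (\<chi> _. m)))"
      using inside[OF z] by (intro summable_disc_coeffs[OF cs g]) (auto simp: sum_nonneg)
    then show "summable (\<lambda>m. \<Sum>\<alpha> | mdeg \<alpha> = m. norm (scX (monom_pow z \<alpha>) (coordinate_sum_coeffs scX c b \<alpha>)))"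
      by (simp add: coordinate_sum_coeffs_level_norm_sum[OF cs])
    have "((\<lambda>m. scX ((c * (\<Sum>i\<in>UNIV. z $ i)) ^ m) (b (\<chi> _. m)))
            has_sum g (\<chi> _. c * (\<Sum>i\<in>UNIV. z $ i))) UNIV"
      using in_disc[OF z] by (intro disc_series_has_sum[OF g]) (simp add: unit_disc1_def)
    then show "((\<lambda>m. \<Sum>\<alpha> | mdeg \<alpha> = m. scX (monom_pow z \<alpha>) (coordinate_sum_coeffs scX c b \<alpha>))
                 has_sum g (\<chi> _. c * (\<Sum>i\<in>UNIV. z $ i))) UNIV"
      by (simp add: coordinate_sum_coeffs_level_sum[OF cs])
  qed (rule finite_mdeg_level)
  moreover have "bounded ((\<lambda>z. g (\<chi> _. c * (\<Sum>i\<in>UNIV. z $ i))) ` \<Omega>)"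
    using in_disc by (intro bounded_subset[OF bhol_series_bounded[OF g]]) auto
  ultimately show ?thesis
    by (simp add: bhol_series_def)
qed

lemma inj_axis_vec1: "inj (\<lambda>\<beta> :: 'a ^ 1. axis i (\<beta> $ 1) :: 'a::zero ^ 'n)"
  by (intro injI) (metis axis_nth vector_one)

lemma axis_vec1_range: "\<alpha> \<in> range (\<lambda>\<beta> :: nat ^ 1. axis i (\<beta> $ 1)) \<longleftrightarrow> (\<forall>j. j \<noteq> i \<longrightarrow> \<alpha> $ j = 0)"
proof
  assume "\<forall>j. j \<noteq> i \<longrightarrow> \<alpha> $ j = 0"
  then have "\<alpha> = axis i ((\<chi> _::1. \<alpha> $ i) $ 1)"
    by (auto simp: vec_eq_iff axis_def)
  then show "\<alpha> \<in> range (\<lambda>\<beta> :: nat ^ 1. axis i (\<beta> $ 1))" by blast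
qed (auto simp: axis_def)

lemma sum_reindex_vimage:
  assumes "inj e" "finite F" "\<And>\<alpha>. \<alpha> \<in> F \<Longrightarrow> \<alpha> \<notin> range e \<Longrightarrow> h \<alpha> = 0"
  shows "sum h F = (\<Sum>\<beta>\<in>e -` F. h (e \<beta>))"
proof -
  have "sum h F = sum h (e ` (e -` F))"
    using assms by (intro sum.mono_neutral_right) auto
  also have "\<dots> = (\<Sum>\<beta>\<in>e -` F. h (e \<beta>))"
    using sum.reindex[OF inj_on_subset[OF assms(1)], of "e -` F" h] by simp
  finally show ?thesis .
qed

lemma bhol_series_restrict_axis:
  assumes cs: "complex_scaling scX" and f: "bhol_series scX \<Omega> f a"
    and axis_in: "\<And>w. cmod w < 1 \<Longrightarrow> axis i w \<in> \<Omega>"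
  shows "bhol_series scX unit_disc1 (\<lambda>w. f (axis i (w $ 1))) (\<lambda>\<beta>. a (axis i (\<beta> $ 1)))"
proof -
  let ?e = "\<lambda>\<beta> :: nat ^ 1. axis i (\<beta> $ 1)"
  have "((\<lambda>\<beta>. scX (monom_pow w \<beta>) (a (?e \<beta>))) has_sum f (axis i (w $ 1))) UNIV"
    if w: "w \<in> unit_disc1" for w
  proof -
    have "((\<lambda>\<alpha>. scX (monom_pow (axis i (w $ 1)) \<alpha>) (a \<alpha>)) has_sum f (axis i (w $ 1))) UNIV"
      using f axis_in w by (simp add: bhol_series_def unit_disc1_def)
    moreover have "((\<lambda>\<alpha>. scX (monom_pow (axis i (w $ 1)) \<alpha>) (a \<alpha>)) has_sum f (axis i (w $ 1))) UNIV
      \<longleftrightarrow> ((\<lambda>\<alpha>. scX (monom_pow (axis i (w $ 1)) \<alpha>) (a \<alpha>)) has_sum f (axis i (w $ 1))) (range ?e)"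
      by (intro has_sum_cong_neutral)
         (auto simp: axis_vec1_range monom_pow_axis complex_scaling_zero_left[OF cs])
    ultimately have "((\<lambda>\<alpha>. scX (monom_pow (axis i (w $ 1)) \<alpha>) (a \<alpha>)) has_sum f (axis i (w $ 1))) (range ?e)"
      by blast
    then show ?thesis
      by (simp add: has_sum_reindex[OF inj_on_subset[OF inj_axis_vec1]] o_def monom_pow_at_axis monom_pow_vec1)
  qed
  moreover have "bounded ((\<lambda>w. f (axis i (w $ 1))) ` unit_disc1)"
    using axis_in by (intro bounded_subset[OF bhol_series_bounded[OF f]]) (auto simp: unit_disc1_def)
  ultimately show ?thesis
    by (simp add: bhol_series_def)
qed

section \<open>Admissible radii\<close>

definition K_admissible ::
  "(complex \<Rightarrow> 'x::real_normed_vector \<Rightarrow> 'x) \<Rightarrow> (complex \<Rightarrow> 'y::real_normed_vector \<Rightarrow> 'y) \<Rightarrow>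
   ('x \<Rightarrow> 'y) \<Rightarrow> real \<Rightarrow> real \<Rightarrow> (complex ^ 'k) set \<Rightarrow> real \<Rightarrow> bool" where
  "K_admissible scX scY U lam p \<Omega> r \<longleftrightarrow> 0 \<le> r \<and>
     (\<forall>f a. bhol_series scX \<Omega> f a \<longrightarrow>
        (\<forall>z\<in>(\<lambda>w. r *\<^sub>R w) ` \<Omega>. \<forall>F. finite F \<longrightarrow>
           (\<Sum>\<alpha>\<in>F. norm (scY (monom_pow z \<alpha>) (U (a \<alpha>))) powr p)
             \<le> lam powr p * supnorm \<Omega> f powr p))"

definition A_admissible ::
  "(complex \<Rightarrow> 'x::real_normed_vector \<Rightarrow> 'x) \<Rightarrow> ('x \<Rightarrow> 'y::real_normed_vector) \<Rightarrow>
   real \<Rightarrow> real \<Rightarrow> (complex ^ 'k) set \<Rightarrow> real ^ 'k \<Rightarrow> bool" where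
  "A_admissible scX U lam p \<Omega> r \<longleftrightarrow> (\<forall>i. 0 \<le> r $ i) \<and>
     (\<forall>f a. bhol_series scX \<Omega> f a \<longrightarrow>
        (\<forall>F. finite F \<longrightarrow>
           (\<Sum>\<alpha>\<in>F. norm (U (a \<alpha>)) powr p * monom_pow r \<alpha> powr p)
             \<le> lam powr p * supnorm \<Omega> f powr p))"

lemma K_admissibleD:
  assumes "K_admissible scX scY U lam p \<Omega> r" "bhol_series scX \<Omega> f a"
    and "z \<in> (\<lambda>w. r *\<^sub>R w) ` \<Omega>" "finite F"
  shows "(\<Sum>\<alpha>\<in>F. norm (scY (monom_pow z \<alpha>) (U (a \<alpha>))) powr p) \<le> lam powr p * supnorm \<Omega> f powr p"
  using assms unfolding K_admissible_def by blast

lemma A_admissibleD: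
  assumes "A_admissible scX U lam p \<Omega> r" "bhol_series scX \<Omega> f a" "finite F"
  shows "(\<Sum>\<alpha>\<in>F. norm (U (a \<alpha>)) powr p * monom_pow r \<alpha> powr p) \<le> lam powr p * supnorm \<Omega> f powr p"
  using assms unfolding A_admissible_def by blast

lemma K_const_eq_Sup: "K_const scX scY U lam p \<Omega> = Sup (Collect (K_admissible scX scY U lam p \<Omega>))"
  unfolding K_const_def K_admissible_def by simp

lemma A_const_eq_Sup:
  "A_const scX U lam p (\<Omega> :: (complex ^ 'k) set)
     = Sup ((\<lambda>r. (\<Sum>i\<in>UNIV. r $ i) / real CARD('k)) ` Collect (A_admissible scX U lam p \<Omega>))"
  unfolding A_const_def A_admissible_def by (simp add: setcompr_eq_image)

lemma norm_coeff_zero_powr_le: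
  assumes cs: "complex_scaling scX" and U: "bounded_linear U" "onorm U \<le> lam" and "0 \<le> p"
    and f: "bhol_series scX \<Omega> f a" and "0 \<in> \<Omega>"
  shows "norm (U (a 0)) powr p \<le> lam powr p * supnorm \<Omega> f powr p"
proof -
  have "norm (U (a 0)) \<le> onorm U * norm (a 0)"
    by (rule onorm[OF U(1)])
  also have "\<dots> \<le> lam * supnorm \<Omega> f"
    using U bhol_series_at_zero[OF cs f \<open>0 \<in> \<Omega>\<close>] onorm_pos_le[OF U(1)]
      norm_le_supnorm[OF bhol_series_bounded[OF f] \<open>0 \<in> \<Omega>\<close>]
    by (intro mult_mono) auto
  finally show ?thesis
    using \<open>0 \<le> p\<close> U onorm_pos_le[OF U(1)] by (simp add: powr_mono2 flip: powr_mult)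
qed

lemma K_admissible_zero:
  fixes \<Omega> :: "(complex ^ 'k) set"
  assumes cs: "complex_scaling scX" "complex_scaling scY"
    and U: "bounded_linear U" "onorm U \<le> lam" and "0 \<le> p" and "0 \<in> \<Omega>"
  shows "K_admissible scX scY U lam p \<Omega> 0"
  unfolding K_admissible_def
proof (intro conjI allI impI ballI order.refl)
  fix f a z and F :: "(nat ^ 'k) set"
  assume f: "bhol_series scX \<Omega> f a" and "z \<in> (\<lambda>w. 0 *\<^sub>R w) ` \<Omega>" and "finite F"
  then have "(\<Sum>\<alpha>\<in>F. norm (scY (monom_pow z \<alpha>) (U (a \<alpha>))) powr p)
               = (\<Sum>\<alpha>\<in>F. if \<alpha> = 0 then norm (U (a 0)) powr p else 0)"
    by (intro sum.cong) (auto simp: monom_pow_zero complex_scaling_one complex_scaling_zero_left cs)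
  also have "\<dots> = (if 0 \<in> F then norm (U (a 0)) powr p else 0)"
    using \<open>finite F\<close> by simp
  also have "\<dots> \<le> lam powr p * supnorm \<Omega> f powr p"
    using norm_coeff_zero_powr_le[OF cs(1) U \<open>0 \<le> p\<close> f \<open>0 \<in> \<Omega>\<close>] by simp
  finally show "(\<Sum>\<alpha>\<in>F. norm (scY (monom_pow z \<alpha>) (U (a \<alpha>))) powr p) \<le> lam powr p * supnorm \<Omega> f powr p" .
qed

lemma A_admissible_zero:
  fixes \<Omega> :: "(complex ^ 'k) set"
  assumes cs: "complex_scaling scX"
    and U: "bounded_linear U" "onorm U \<le> lam" and "0 \<le> p" and "0 \<in> \<Omega>"
  shows "A_admissible scX U lam p \<Omega> 0"
  unfolding A_admissible_def
proof (intro conjI allI impI)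
  fix f a and F :: "(nat ^ 'k) set"
  assume f: "bhol_series scX \<Omega> f a" and "finite F"
  have "(\<Sum>\<alpha>\<in>F. norm (U (a \<alpha>)) powr p * monom_pow (0 :: real ^ 'k) \<alpha> powr p)
               = (\<Sum>\<alpha>\<in>F. if \<alpha> = 0 then norm (U (a 0)) powr p else 0)"
    by (intro sum.cong) (auto simp: monom_pow_zero)
  also have "\<dots> = (if 0 \<in> F then norm (U (a 0)) powr p else 0)"
    using \<open>finite F\<close> by simp
  also have "\<dots> \<le> lam powr p * supnorm \<Omega> f powr p"
    using norm_coeff_zero_powr_le[OF cs U \<open>0 \<le> p\<close> f \<open>0 \<in> \<Omega>\<close>] by simp
  finally show "(\<Sum>\<alpha>\<in>F. norm (U (a \<alpha>)) powr p * monom_pow (0 :: real ^ 'k) \<alpha> powr p)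
                  \<le> lam powr p * supnorm \<Omega> f powr p" .
qed simp

lemma le_one_if_power_mult_bounded:
  fixes q c B :: real
  assumes "0 < c" "\<And>m. q ^ m * c \<le> B"
  shows "q \<le> 1"
proof (rule ccontr)
  assume "\<not> q \<le> 1"
  then obtain m where "B / c < q ^ m"
    using real_arch_pow[of q "B / c"] by auto
  then have "B < q ^ m * c"
    using \<open>0 < c\<close> by (simp add: pos_divide_less_eq)
  with assms(2)[of m] show False by linarith
qed

lemma powr_le_powr_imp_le:
  fixes x y p :: real
  assumes "0 < p" "0 \<le> x" "0 \<le> y" "x powr p \<le> y powr p"
  shows "x \<le> y"
proof (rule ccontr)
  assume "\<not> x \<le> y"
  then have "y powr p < x powr p"
    using assms by (intro powr_less_mono2) auto
  with assms(4) show False by linarith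
qed

lemma K_admissible_unit_disc1_le_one:
  assumes cs: "complex_scaling scX" "complex_scaling scY"
    and Ux: "U x \<noteq> 0" and "0 \<le> lam" "0 < p"
    and K: "K_admissible scX scY U lam p unit_disc1 \<rho>"
  shows "\<rho> \<le> 1"
proof (rule ccontr)
  assume "\<not> \<rho> \<le> 1"
  define s where "s = (1 + \<rho>) / 2"
  have s: "1 < s" "s < \<rho>" using \<open>\<not> \<rho> \<le> 1\<close> by (auto simp: s_def)
  have "s ^ m * norm (U x) \<le> lam * norm x" for m
  proof -
    define \<alpha>\<^sub>0 where "\<alpha>\<^sub>0 = (\<chi> _::1. m)"
    have le1: "cmod (monom_pow w \<alpha>\<^sub>0) \<le> 1" if "w \<in> unit_disc1" for w
      using that by (simp add: \<alpha>\<^sub>0_def monom_pow_vec1 unit_disc1_def norm_power power_le_one)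
    note test = bhol_series_monomial[OF cs(1) le1, where x = x]
    define z where "z = (\<chi> _::1. complex_of_real s)"
    have "z \<in> (\<lambda>w. \<rho> *\<^sub>R w) ` unit_disc1"
      unfolding z_def using s by (intro of_real_vec1_in_scaled_unit_disc1) auto
    then have "norm (scY (monom_pow z \<alpha>\<^sub>0) (U x)) powr p
                 \<le> lam powr p * supnorm unit_disc1 (\<lambda>w. scX (monom_pow w \<alpha>\<^sub>0) x) powr p"
      using K_admissibleD[OF K test(1) \<open>z \<in> _\<close>, of "{\<alpha>\<^sub>0}"] by simp
    also have "\<dots> \<le> lam powr p * norm x powr p"
      using test zero_in_unit_disc1 \<open>0 < p\<close>
      by (intro mult_left_mono powr_mono2 supnorm_nonneg[OF bhol_series_bounded]) auto
    also have "\<dots> = (lam * norm x) powr p"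
      using \<open>0 \<le> lam\<close> by (simp add: powr_mult)
    also have "norm (scY (monom_pow z \<alpha>\<^sub>0) (U x)) = s ^ m * norm (U x)"
      using s by (simp add: z_def \<alpha>\<^sub>0_def monom_pow_vec1 norm_complex_scaling[OF cs(2)] norm_power)
    finally have "(s ^ m * norm (U x)) powr p \<le> (lam * norm x) powr p" .
    then show ?thesis
      by (rule powr_le_powr_imp_le[OF \<open>0 < p\<close>, rotated 2]) (use s \<open>0 \<le> lam\<close> in auto)
  qed
  then have "s \<le> 1"
    using Ux by (intro le_one_if_power_mult_bounded[of "norm (U x)"]) auto
  with s show False by simp
qed

lemma A_admissible_axis_if_K_admissible:
  fixes \<Omega> :: "(complex ^ 'n) set"
  assumes cs: "complex_scaling scX" "complex_scaling scY" and "0 \<le> p"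
    and axis_in: "\<And>w. cmod w < 1 \<Longrightarrow> axis i w \<in> \<Omega>"
    and K: "K_admissible scX scY U lam p unit_disc1 \<rho>" and s: "0 \<le> s" "s < \<rho>"
  shows "A_admissible scX U lam p \<Omega> (axis i s)"
  unfolding A_admissible_def
proof (intro conjI allI impI)
  show "0 \<le> axis i s $ j" for j
    using s by (simp add: axis_def)
  fix f a and F :: "(nat ^ 'n) set"
  assume f: "bhol_series scX \<Omega> f a" and "finite F"
  let ?e = "\<lambda>\<beta> :: nat ^ 1. axis i (\<beta> $ 1)"
  define z where "z = (\<chi> _::1. complex_of_real s)"
  have z: "z \<in> (\<lambda>w. \<rho> *\<^sub>R w) ` unit_disc1"
    unfolding z_def using s by (rule of_real_vec1_in_scaled_unit_disc1)
  note g = bhol_series_restrict_axis[OF cs(1) f axis_in]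
  have "(\<Sum>\<alpha>\<in>F. norm (U (a \<alpha>)) powr p * monom_pow (axis i s) \<alpha> powr p)
          = (\<Sum>\<beta>\<in>?e -` F. norm (U (a (?e \<beta>))) powr p * monom_pow (axis i s) (?e \<beta>) powr p)"
    using \<open>finite F\<close> by (intro sum_reindex_vimage inj_axis_vec1) (auto simp: axis_vec1_range monom_pow_axis)
  also have "\<dots> = (\<Sum>\<beta>\<in>?e -` F. norm (scY (monom_pow z \<beta>) (U (a (?e \<beta>)))) powr p)"
    using s by (intro sum.cong)
               (simp_all add: z_def monom_pow_at_axis monom_pow_vec1 norm_complex_scaling[OF cs(2)]
                              norm_power powr_mult mult.commute)
  also have "\<dots> \<le> lam powr p * supnorm unit_disc1 (\<lambda>w. f (axis i (w $ 1))) powr p"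
    using \<open>finite F\<close> inj_axis_vec1
    by (intro K_admissibleD[OF K g z] finite_vimageI) auto
  also have "\<dots> \<le> lam powr p * supnorm \<Omega> f powr p"
    using \<open>0 \<le> p\<close> zero_in_unit_disc1 axis_in
    by (intro mult_left_mono powr_mono2 supnorm_comp_le bhol_series_bounded[OF f]
              supnorm_nonneg[OF bhol_series_bounded[OF g] zero_in_unit_disc1])
       (auto simp: unit_disc1_def intro: exI[of _ 0])
  finally show "(\<Sum>\<alpha>\<in>F. norm (U (a \<alpha>)) powr p * monom_pow (axis i s) \<alpha> powr p)
                  \<le> lam powr p * supnorm \<Omega> f powr p" .
qed

lemma sum_powr_power_le_multinomial_sum:
  fixes r :: "real ^ 'n"
  assumes r: "\<And>i. 0 \<le> r $ i" and p: "1 \<le> p"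
  shows "(\<Sum>i\<in>UNIV. r $ i powr p) ^ m
           \<le> (\<Sum>\<alpha> | mdeg \<alpha> = m. (real (multinomial_coeff \<alpha>) * monom_pow r \<alpha>) powr p)"
proof -
  have "(\<Sum>i\<in>UNIV. r $ i powr p) ^ m
          = (\<Sum>\<alpha> | mdeg \<alpha> = m. real (multinomial_coeff \<alpha>) * monom_pow r \<alpha> powr p)"
    using multinomial_expansion[of "\<chi> i. r $ i powr p" m] by (simp add: monom_pow_powr r)
  also have "\<dots> \<le> (\<Sum>\<alpha> | mdeg \<alpha> = m. (real (multinomial_coeff \<alpha>) * monom_pow r \<alpha>) powr p)"
  proof (intro sum_mono)
    fix \<alpha> :: "nat ^ 'n"
    have "real k \<le> real k powr p" for k :: nat
    proof (cases "k = 0")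
      case False
      then have "real k powr 1 \<le> real k powr p"
        using p by (intro powr_mono) auto
      with False show ?thesis by simp
    qed simp
    then show "real (multinomial_coeff \<alpha>) * monom_pow r \<alpha> powr p
                 \<le> (real (multinomial_coeff \<alpha>) * monom_pow r \<alpha>) powr p"
      using r by (simp add: powr_mult monom_pow_nonneg mult_right_mono)
  qed
  finally show ?thesis .
qed

lemma powr_monomial_term_le_level_sum:
  fixes r :: "real ^ 'n"
  assumes r: "\<And>i. 0 \<le> r $ i" and p: "1 \<le> p"
    and t: "0 \<le> t" "t powr p \<le> (\<Sum>i\<in>UNIV. r $ i powr p)"
    and x: "0 \<le> x" "x \<le> \<kappa> * t" and "0 \<le> \<kappa>" "0 \<le> u"
  shows "(x ^ m * u) powr p
           \<le> (\<Sum>\<alpha> | mdeg \<alpha> = m. (\<kappa> ^ m * real (multinomial_coeff \<alpha>) * u) powr p * monom_pow r \<alpha> powr p)"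
proof -
  have "(x ^ m * u) powr p \<le> ((\<kappa> * t) ^ m * u) powr p"
    using assms p by (intro powr_mono2 mult_right_mono power_mono) auto
  also have "\<dots> = (\<kappa> ^ m * u) powr p * (t powr p) ^ m"
    using assms by (simp add: power_mult_distrib powr_mult power_powr_nonneg mult_ac)
  also have "\<dots> \<le> (\<kappa> ^ m * u) powr p * (\<Sum>i\<in>UNIV. r $ i powr p) ^ m"
    using t by (intro mult_left_mono power_mono) auto
  also have "\<dots> \<le> (\<kappa> ^ m * u) powr p
                  * (\<Sum>\<alpha> | mdeg \<alpha> = m. (real (multinomial_coeff \<alpha>) * monom_pow r \<alpha>) powr p)"
    using r p by (intro mult_left_mono sum_powr_power_le_multinomial_sum) auto
  also have "\<dots> = (\<Sum>\<alpha> | mdeg \<alpha> = m. (\<kappa> ^ m * real (multinomial_coeff \<alpha>) * u) powr p * monom_pow r \<alpha> powr p)"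
    unfolding sum_distrib_left
    using assms by (intro sum.cong) (simp_all add: powr_mult monom_pow_nonneg mult_ac)
  finally show ?thesis .
qed

lemma sum_le_if_mdeg_level_sums_le:
  fixes h :: "nat ^ 1 \<Rightarrow> real" and k :: "nat ^ 'n \<Rightarrow> real"
  assumes "finite G" and h: "\<And>\<beta>. h \<beta> \<le> (\<Sum>\<alpha> | mdeg \<alpha> = \<beta> $ 1. k \<alpha>)"
    and k: "\<And>H. finite H \<Longrightarrow> sum k H \<le> B"
  shows "sum h G \<le> B"
proof -
  have "sum h G \<le> (\<Sum>\<beta>\<in>G. \<Sum>\<alpha> | mdeg \<alpha> = \<beta> $ 1. k \<alpha>)"
    by (intro sum_mono h)
  also have "\<dots> = sum k (\<Union>\<beta>\<in>G. {\<alpha>. mdeg \<alpha> = \<beta> $ 1})"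
    using \<open>finite G\<close>
    by (intro sum.UNION_disjoint[symmetric]) (auto simp: finite_mdeg_level vec_eq_iff[of _ "_::nat^1"])
  also have "\<dots> \<le> B"
    using \<open>finite G\<close> by (intro k) (simp add: finite_mdeg_level)
  finally show ?thesis .
qed

lemma K_admissible_if_A_admissible:
  fixes \<Omega> :: "(complex ^ 'n) set" and U :: "'x::banach \<Rightarrow> 'y::real_normed_vector"
  assumes cs: "complex_scaling scX" "complex_scaling scY"
    and Uc: "\<And>c x. U (scX c x) = scY c (U x)" and p: "1 \<le> p"
    and "\<Omega> \<noteq> {}" and inside: "\<And>z. z \<in> \<Omega> \<Longrightarrow> cmod c * (\<Sum>i\<in>UNIV. cmod (z $ i)) < 1"
    and A: "A_admissible scX U lam p \<Omega> r"
  shows "K_admissible scX scY U lam p unit_disc1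
           (cmod c * (\<Sum>i\<in>UNIV. r $ i) / real CARD('n) powr (1 - 1 / p))"
  unfolding K_admissible_def
proof (intro conjI allI impI ballI)
  have r: "0 \<le> r $ i" for i
    using A by (simp add: A_admissible_def)
  define t where "t = (\<Sum>i\<in>UNIV. r $ i) / real CARD('n) powr (1 - 1 / p)"
  have t: "0 \<le> t"
    by (simp add: t_def r sum_nonneg)
  show "0 \<le> cmod c * (\<Sum>i\<in>UNIV. r $ i) / real CARD('n) powr (1 - 1 / p)"
    by (simp add: r sum_nonneg)
  have tp: "t powr p \<le> (\<Sum>i\<in>UNIV. r $ i powr p)"
    unfolding t_def using r p by (rule powr_sum_div_card_powr_le_sum_powr)
  fix g b z and G :: "(nat ^ 1) set"
  assume g: "bhol_series scX unit_disc1 g b"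
    and z: "z \<in> (\<lambda>w. (cmod c * (\<Sum>i\<in>UNIV. r $ i) / real CARD('n) powr (1 - 1 / p)) *\<^sub>R w) ` unit_disc1"
    and "finite G"
  define a where "a = (coordinate_sum_coeffs scX c b :: nat ^ 'n \<Rightarrow> _)"
  have f: "bhol_series scX \<Omega> (\<lambda>z. g (\<chi> _. c * (\<Sum>i\<in>UNIV. z $ i))) a"
    unfolding a_def using cs(1) g inside by (rule bhol_series_comp_sum)
  have level_sums: "(\<Sum>\<alpha>\<in>H. norm (U (a \<alpha>)) powr p * monom_pow r \<alpha> powr p)
                       \<le> lam powr p * supnorm unit_disc1 g powr p" if "finite H" for H
  proof -
    have "(\<Sum>\<alpha>\<in>H. norm (U (a \<alpha>)) powr p * monom_pow r \<alpha> powr p)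
            \<le> lam powr p * supnorm \<Omega> (\<lambda>z. g (\<chi> _. c * (\<Sum>i\<in>UNIV. z $ i))) powr p"
      by (rule A_admissibleD[OF A f that])
    also have "\<dots> \<le> lam powr p * supnorm unit_disc1 g powr p"
      using p \<open>\<Omega> \<noteq> {}\<close> inside
      by (intro mult_left_mono powr_mono2 supnorm_comp_le bhol_series_bounded[OF g]
                scaled_coordinate_sum_in_unit_disc1)
         (auto intro: supnorm_nonneg[OF bhol_series_bounded[OF f]])
    finally show ?thesis .
  qed
  have term_le: "norm (scY (monom_pow z \<beta>) (U (b \<beta>))) powr p
                   \<le> (\<Sum>\<alpha> | mdeg \<alpha> = \<beta> $ 1. norm (U (a \<alpha>)) powr p * monom_pow r \<alpha> powr p)" for \<beta>
  proof -
    obtain w where "w \<in> unit_disc1" and zw: "z = (cmod c * t) *\<^sub>R w"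
      using z by (auto simp: t_def)
    then have "cmod (z $ 1) \<le> cmod c * t"
      using t by (simp add: unit_disc1_def mult_left_le)
    moreover have "norm (U (a \<alpha>)) = cmod c ^ \<beta> $ 1 * real (multinomial_coeff \<alpha>) * norm (U (b \<beta>))"
      if "mdeg \<alpha> = \<beta> $ 1" for \<alpha>
      using that by (simp add: a_def coordinate_sum_coeffs_def Uc norm_complex_scaling[OF cs(2)]
                               norm_mult norm_power flip: vector_one)
    ultimately show ?thesis
      using powr_monomial_term_le_level_sum[OF r p t tp, of "cmod (z $ 1)" "cmod c" "norm (U (b \<beta>))" "\<beta> $ 1"]
      by (simp add: monom_pow_vec1 norm_complex_scaling[OF cs(2)] norm_power)
  qed
  show "(\<Sum>\<beta>\<in>G. norm (scY (monom_pow z \<beta>) (U (b \<beta>))) powr p) \<le> lam powr p * supnorm unit_disc1 g powr p"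
    using \<open>finite G\<close> term_le level_sums by (rule sum_le_if_mdeg_level_sums_le)
qed

lemma K_const_div_card_le_A_const:
  fixes N :: "complex ^ 'n \<Rightarrow> real" and U :: "'x::banach \<Rightarrow> 'y::real_normed_vector"
  assumes cs: "complex_scaling scX" "complex_scaling scY"
    and U: "bounded_linear U" "onorm U \<le> lam" and "0 \<le> p"
    and N: "normalized_1_unconditional_norm N"
    and bdd: "bdd_above ((\<lambda>r. (\<Sum>i\<in>UNIV. r $ i) / real CARD('n))
                          ` Collect (A_admissible scX U lam p (open_unit_ball N)))"
  shows "K_const scX scY U lam p unit_disc1 / real CARD('n) \<le> A_const scX U lam p (open_unit_ball N)"
proof -
  let ?A = "A_const scX U lam p (open_unit_ball N)"
  have mean_le_A: "(\<Sum>i\<in>UNIV. r $ i) / real CARD('n) \<le> ?A"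
    if "A_admissible scX U lam p (open_unit_ball N) r" for r
    unfolding A_const_eq_Sup using that by (intro cSup_upper bdd) auto
  have "0 \<le> ?A"
    using mean_le_A[OF A_admissible_zero[OF cs(1) U \<open>0 \<le> p\<close> zero_in_open_unit_ball[OF N]]] by simp
  then have "0 \<le> real CARD('n) * ?A" by simp
  fix i :: 'n
  have axis_in_ball: "axis i w \<in> open_unit_ball N" if "cmod w < 1" for w
    using that by (simp add: open_unit_ball_def unconditional_norm_axis[OF N])
  have "\<rho> \<le> real CARD('n) * ?A" if K: "K_admissible scX scY U lam p unit_disc1 \<rho>" for \<rho>
  proof (rule dense_le)
    fix s assume "s < \<rho>"
    show "s \<le> real CARD('n) * ?A"
    proof (cases "0 \<le> s")
      case True
      then have "(\<Sum>j\<in>UNIV. axis i s $ j) / real CARD('n) \<le> ?A"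
        using \<open>s < \<rho>\<close> by (intro mean_le_A A_admissible_axis_if_K_admissible[OF cs \<open>0 \<le> p\<close> axis_in_ball K])
      then show ?thesis
        by (simp add: axis_def divide_le_eq mult.commute)
    qed (use \<open>0 \<le> real CARD('n) * ?A\<close> in linarith)
  qed
  then have "K_const scX scY U lam p unit_disc1 \<le> real CARD('n) * ?A"
    unfolding K_const_eq_Sup
    using K_admissible_zero[OF cs U \<open>0 \<le> p\<close> zero_in_unit_disc1] by (intro cSup_least) auto
  then show ?thesis
    by (simp add: divide_le_eq mult.commute)
qed

lemma A_admissible_mean_le:
  fixes N :: "complex ^ 'n \<Rightarrow> real" and U :: "'x::banach \<Rightarrow> 'y::real_normed_vector"
  assumes cs: "complex_scaling scX" "complex_scaling scY"
    and Uc: "\<And>c x. U (scX c x) = scY c (U x)" and p: "1 \<le> p"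
    and N: "normalized_1_unconditional_norm N"
    and bdd: "bdd_above (Collect (K_admissible scX scY U lam p unit_disc1))"
    and A: "A_admissible scX U lam p (open_unit_ball N) r"
  shows "(\<Sum>i\<in>UNIV. r $ i) / real CARD('n)
           \<le> id_to_l1_norm N * K_const scX scY U lam p unit_disc1 / real CARD('n) powr (1 / p)"
proof -
  define C where "C = id_to_l1_norm N"
  define n where "n = real CARD('n)"
  have C: "1 \<le> C" using id_to_l1_norm_ge_one[OF N] by (simp add: C_def)
  have "cmod (complex_of_real (1 / C)) * (\<Sum>i\<in>UNIV. cmod (z $ i)) < 1"
    if "z \<in> open_unit_ball N" for z
  proof -
    have "(\<Sum>i\<in>UNIV. cmod (z $ i)) \<le> C * N z"
      using l1_norm_le_id_to_l1_norm[OF N] by (simp add: C_def)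
    also have "\<dots> < C"
      using that C by (simp add: open_unit_ball_def)
    finally show ?thesis
      using C by (simp add: norm_divide field_simps)
  qed
  then have "K_admissible scX scY U lam p unit_disc1
               (cmod (complex_of_real (1 / C)) * (\<Sum>i\<in>UNIV. r $ i) / n powr (1 - 1 / p))"
    unfolding n_def using zero_in_open_unit_ball[OF N]
    by (intro K_admissible_if_A_admissible[OF cs Uc p _ _ A]) auto
  moreover have "cmod (complex_of_real (1 / C)) * (\<Sum>i\<in>UNIV. r $ i) / n powr (1 - 1 / p)
                   = (\<Sum>i\<in>UNIV. r $ i) / C / n powr (1 - 1 / p)"
    using C by (simp add: norm_divide)
  ultimately have "K_admissible scX scY U lam p unit_disc1 ((\<Sum>i\<in>UNIV. r $ i) / C / n powr (1 - 1 / p))"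
    by simp
  then have K: "(\<Sum>i\<in>UNIV. r $ i) / C / n powr (1 - 1 / p) \<le> K_const scX scY U lam p unit_disc1"
    unfolding K_const_eq_Sup by (rule cSup_upper[OF _ bdd, simplified])
  have "n powr (1 - 1 / p) * n powr (1 / p) = n"
    by (simp add: n_def flip: powr_add)
  then have "(\<Sum>i\<in>UNIV. r $ i) / n = C * ((\<Sum>i\<in>UNIV. r $ i) / C / n powr (1 - 1 / p)) / n powr (1 / p)"
    using C by (simp add: n_def field_simps)
  also have "\<dots> \<le> C * K_const scX scY U lam p unit_disc1 / n powr (1 / p)"
    using K C by (intro divide_right_mono mult_left_mono) auto
  finally show ?thesis
    by (simp add: C_def n_def)
qed

theorem mainTheorem18:
  fixes scX :: "complex \<Rightarrow> 'x::banach \<Rightarrow> 'x"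
    and scY :: "complex \<Rightarrow> 'y::banach \<Rightarrow> 'y"
    and U :: "'x \<Rightarrow> 'y"
    and lam p :: real
    and N :: "complex ^ 'n \<Rightarrow> real"
  assumes "complex_scaling scX" and "complex_scaling scY"
    and "bounded_linear U" and "\<forall>c x. U (scX c x) = scY c (U x)"
    and "U \<noteq> (\<lambda>x. 0)"
    and "onorm U < lam"
    and "1 \<le> p"
    and "normalized_1_unconditional_norm N"
  shows "K_const scX scY U lam p unit_disc1 / real CARD('n)
           \<le> A_const scX U lam p (open_unit_ball N)
       \<and> A_const scX U lam p (open_unit_ball N)
           \<le> id_to_l1_norm N * K_const scX scY U lam p unit_disc1 / real CARD('n) powr (1 / p)"
proof -
  note cs = assms(1,2) and U = assms(3) order.strict_implies_order[OF assms(6)]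
  obtain x where "U x \<noteq> 0" using assms(5) by blast
  moreover have "0 \<le> lam" using onorm_pos_le[OF assms(3)] assms(6) by linarith
  moreover have "0 < p" using assms(7) by simp
  ultimately have "bdd_above (Collect (K_admissible scX scY U lam p unit_disc1))"
    using K_admissible_unit_disc1_le_one[OF cs] by (intro bdd_aboveI[of _ 1]) auto
  then have mean_le: "m \<le> id_to_l1_norm N * K_const scX scY U lam p unit_disc1 / real CARD('n) powr (1 / p)"
    if "m \<in> (\<lambda>r. (\<Sum>i\<in>UNIV. r $ i) / real CARD('n)) ` Collect (A_admissible scX U lam p (open_unit_ball N))"
    for m
    using that A_admissible_mean_le[OF cs _ assms(7,8)] assms(4) by auto
  show ?thesis
  proof
    show "K_const scX scY U lam p unit_disc1 / real CARD('n) \<le> A_const scX U lam p (open_unit_ball N)"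
      using mean_le assms(7) by (intro K_const_div_card_le_A_const[OF cs U _ assms(8)] bdd_aboveI) auto
    show "A_const scX U lam p (open_unit_ball N)
            \<le> id_to_l1_norm N * K_const scX scY U lam p unit_disc1 / real CARD('n) powr (1 / p)"
      unfolding A_const_eq_Sup
      using mean_le A_admissible_zero[OF cs(1) U less_imp_le[OF \<open>0 < p\<close>] zero_in_open_unit_ball[OF assms(8)]]
      by (intro cSup_least) auto
  qed
qed

end
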